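(* Let $P,P',Q,S,\gamma$ be programs and $B$ a Boolean expression such that $P'\equiv_B(P,B)$ and $Q\equiv_B(P,\neg B)$. If the operational triple $\{|P'|\}\ S\ \{|\gamma;P|\}$ holds, then $\{|P|\}\ \mathbf{while}\ (B)\ \mathbf{do}\ S\ \mathbf{elihw}\ \{|Q|\}$ holds.
   Context: Programs are statements of a sequential imperative language with a standard small-step operational semantics over program states. $\mathrm{behs}(P)$ is the set of pairs (initial state, final state) of finite terminating executions of $P$; $(s,u)\in\mathrm{behs}(P;Q)$ iff there is $t$ with $(s,t)\in\mathrm{behs}(P)$ and $(t,u)\in\mathrm{behs}(Q)$. For a state $s$ and Boolean expression $B$, $s(B)\in\{\mathit{tt},\mathit{ff}\}$ is the (side-effect-free) value of $B$ in $s$. The loop $\mathbf{while}\ (B)\ \mathbf{do}\ S\ \mathbf{elihw}$ started in state $s$ terminates in $s$ if $s(B)=\mathit{ff}$, and otherwise executes $S$ and then repeats the loop from the resulting state. The post-state set is $\mathrm{pst}(P)=\{t:\exists s,\ (s,t)\in\mathrm{behs}(P)\}$. The operational triple $\{|P|\}\ S\ \{|Q|\}$ means $\mathrm{pst}(P;S)\subseteq\mathrm{pst}(Q)$. For programs $P',P$ and Boolean expression $B$, $P'\equiv_B(P,B)$ means $\mathrm{pst}(P')=\mathrm{pst}(P)\cap\{s : s(B)=\mathit{tt}\}$. *)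

theory Defs
  imports Main
begin

text \<open>Boolean expressions are side-effect-free state predicates; atomic statements
  (assignments, possibly nondeterministic) are given by a state relation.\<close>

type_synonym 's bexp = "'s \<Rightarrow> bool"

datatype 's com =
    Skip
  | Basic "('s \<times> 's) set"
  | Seq "'s com" "'s com"
  | If "'s bexp" "'s com" "'s com"
  | While "'s bexp" "'s com"

inductive step :: "'s com \<times> 's \<Rightarrow> 's com \<times> 's \<Rightarrow> bool" where
  Basic: "(s, t) \<in> R \<Longrightarrow> step (Basic R, s) (Skip, t)"
| Seq1: "step (Seq Skip c2, s) (c2, s)"
| Seq2: "step (c1, s) (c1', t) \<Longrightarrow> step (Seq c1 c2, s) (Seq c1' c2, t)"
| IfT: "b s \<Longrightarrow> step (If b c1 c2, s) (c1, s)"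
| IfF: "\<not> b s \<Longrightarrow> step (If b c1 c2, s) (c2, s)"
| While: "step (While b c, s) (If b (Seq c (While b c)) Skip, s)"

definition behs :: "'s com \<Rightarrow> ('s \<times> 's) set" where
  "behs P = {(s, t). step\<^sup>*\<^sup>* (P, s) (Skip, t)}"

definition pst :: "'s com \<Rightarrow> 's set" where
  "pst P = {t. \<exists>s. (s, t) \<in> behs P}"

definition op_triple :: "'s com \<Rightarrow> 's com \<Rightarrow> 's com \<Rightarrow> bool" where
  "op_triple P S Q \<longleftrightarrow> pst (Seq P S) \<subseteq> pst Q"

definition equiv_B :: "'s com \<Rightarrow> 's com \<Rightarrow> 's bexp \<Rightarrow> bool" where
  "equiv_B P' P B \<longleftrightarrow> pst P' = pst P \<inter> {s. B s}"

end

theory Submission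
  imports Defs
begin

text \<open>Terminating runs of \<open>Seq c\<^sub>1 c\<^sub>2\<close> split into runs of \<open>c\<^sub>1\<close> and \<open>c\<^sub>2\<close>, so
  \<open>pst (Seq c\<^sub>1 c\<^sub>2)\<close> is the \<open>c\<^sub>2\<close>-image of \<open>pst c\<^sub>1\<close> and lies in \<open>pst c\<^sub>2\<close>. Hence the
  triple \<open>{|P'|} S {|\<gamma>;P|}\<close> makes \<open>pst P\<close> invariant under terminating runs of \<open>S\<close>
  started where \<open>B\<close> holds, and by induction on the length of a run of the loop,
  every final state of the loop started in \<open>pst P\<close> lies in \<open>pst P\<close> and falsifies \<open>B\<close>,
  i.e. lies in \<open>pst Q\<close>.\<close>

lemma Skip_no_step: "\<not> step (Skip, s) cfg"
  by (auto elim: step.cases)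

lemma relpowp_Skip_SkipD: "(step ^^ n) (Skip, s) (Skip, u) \<Longrightarrow> u = s"
  by (cases n) (use Skip_no_step relpowp_Suc_D2 in fastforce)+

lemma rtranclp_Seq_left:
  "step\<^sup>*\<^sup>* (c\<^sub>1, s) cfg \<Longrightarrow> step\<^sup>*\<^sup>* (Seq c\<^sub>1 c\<^sub>2, s) (Seq (fst cfg) c\<^sub>2, snd cfg)"
proof (induction rule: rtranclp_induct)
  case (step cfg cfg')
  then show ?case
    by (cases cfg; cases cfg') (auto intro: rtranclp.rtrancl_into_rtrancl step.Seq2)
qed simp

lemma relpowp_Seq_SkipD:
  assumes "(step ^^ n) (Seq c\<^sub>1 c\<^sub>2, s) (Skip, u)"
  obtains t m k where "(step ^^ m) (c\<^sub>1, s) (Skip, t)" "(step ^^ k) (c\<^sub>2, t) (Skip, u)" "k < n"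
  using assms
proof (induction n arbitrary: c\<^sub>1 s)
  case (Suc n)
  from Suc.prems(2) obtain cfg where
    first: "step (Seq c\<^sub>1 c\<^sub>2, s) cfg" and rest: "(step ^^ n) cfg (Skip, u)"
    by (blast dest: relpowp_Suc_D2)
  from first show ?case
  proof (cases rule: step.cases)
    case Seq1
    with rest show ?thesis
      by (intro Suc.prems(1)[where m = 0]) auto
  next
    case (Seq2 c\<^sub>1' t)
    with rest have "(step ^^ n) (Seq c\<^sub>1' c\<^sub>2, t) (Skip, u)"
      by simp
    then show ?thesis
      by (rule Suc.IH[rotated]) (use Seq2 in \<open>auto intro: Suc.prems(1) relpowp_Suc_I2 less_SucI\<close>)
  qed
qed simp

lemma behs_Seq: "behs (Seq c\<^sub>1 c\<^sub>2) = behs c\<^sub>1 O behs c\<^sub>2"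
proof (intro set_eqI iffI)
  fix x assume "x \<in> behs (Seq c\<^sub>1 c\<^sub>2)"
  then obtain s u n where "x = (s, u)" "(step ^^ n) (Seq c\<^sub>1 c\<^sub>2, s) (Skip, u)"
    unfolding behs_def by (auto dest: rtranclp_imp_relpowp)
  then show "x \<in> behs c\<^sub>1 O behs c\<^sub>2"
    by (elim relpowp_Seq_SkipD) (auto simp: behs_def dest: relpowp_imp_rtranclp)
next
  fix x assume "x \<in> behs c\<^sub>1 O behs c\<^sub>2"
  then obtain s t u where x: "x = (s, u)"
    and run\<^sub>1: "step\<^sup>*\<^sup>* (c\<^sub>1, s) (Skip, t)" and run\<^sub>2: "step\<^sup>*\<^sup>* (c\<^sub>2, t) (Skip, u)"
    unfolding behs_def by blast
  have "step\<^sup>*\<^sup>* (Seq c\<^sub>1 c\<^sub>2, s) (Seq Skip c\<^sub>2, t)"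
    using rtranclp_Seq_left[OF run\<^sub>1] by simp
  also have "step (Seq Skip c\<^sub>2, t) (c\<^sub>2, t)"
    by (rule step.Seq1)
  finally show "x \<in> behs (Seq c\<^sub>1 c\<^sub>2)"
    using run\<^sub>2 x unfolding behs_def by simp
qed

lemma pst_Seq: "pst (Seq c\<^sub>1 c\<^sub>2) = behs c\<^sub>2 `` pst c\<^sub>1"
  by (auto simp: pst_def behs_Seq)

lemma pst_Seq_subset: "pst (Seq c\<^sub>1 c\<^sub>2) \<subseteq> pst c\<^sub>2"
  by (auto simp: pst_def behs_Seq)

lemma relpowp_While_SkipD:
  assumes "(step ^^ n) (While B S, s) (Skip, u)"
  obtains "\<not> B s" "u = s"
    | t k where "B s" "(s, t) \<in> behs S" "(step ^^ k) (While B S, t) (Skip, u)" "k < n"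
proof -
  obtain n' where n: "n = Suc n'"
    using assms by (cases n) auto
  with assms obtain cfg where "step (While B S, s) cfg" "(step ^^ n') cfg (Skip, u)"
    by (blast dest: relpowp_Suc_D2)
  then have unfolded: "(step ^^ n') (If B (Seq S (While B S)) Skip, s) (Skip, u)"
    by (auto elim: step.cases)
  then obtain n'' where n': "n' = Suc n''"
    by (cases n') auto
  with unfolded obtain cfg' where
    "step (If B (Seq S (While B S)) Skip, s) cfg'" "(step ^^ n'') cfg' (Skip, u)"
    by (blast dest: relpowp_Suc_D2)
  then show thesis
  proof (cases rule: step.cases)
    case IfT
    with \<open>(step ^^ n'') cfg' (Skip, u)\<close> have "(step ^^ n'') (Seq S (While B S), s) (Skip, u)"
      by simp
    then obtain t m k where
      "(step ^^ m) (S, s) (Skip, t)" "(step ^^ k) (While B S, t) (Skip, u)" "k < n''"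
      by (rule relpowp_Seq_SkipD)
    then show thesis
      using IfT by (intro that(2)) (auto simp: n n' behs_def dest: relpowp_imp_rtranclp)
  next
    case IfF
    with \<open>(step ^^ n'') cfg' (Skip, u)\<close> show thesis
      by (auto intro: that(1) dest: relpowp_Skip_SkipD)
  qed
qed

lemma behs_While_invariant:
  assumes preserved: "\<And>t u. t \<in> I \<Longrightarrow> B t \<Longrightarrow> (t, u) \<in> behs S \<Longrightarrow> u \<in> I"
    and run: "(s, u) \<in> behs (While B S)" and start: "s \<in> I"
  shows "u \<in> I \<and> \<not> B u"
proof -
  obtain n where "(step ^^ n) (While B S, s) (Skip, u)"
    using run unfolding behs_def by (blast dest: rtranclp_imp_relpowp)
  then show ?thesis
    using start
  proof (induction n arbitrary: s rule: less_induct)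
    case (less n)
    from less.prems(1) show ?case
      by (rule relpowp_While_SkipD) (use less preserved in blast)+
  qed
qed

theorem theorem2:
  fixes P P' Q S \<gamma> :: "'s com" and B :: "'s bexp"
  assumes "equiv_B P' P B"
    and "equiv_B Q P (\<lambda>s. \<not> B s)"
    and "op_triple P' S (Seq \<gamma> P)"
  shows "op_triple P (While B S) Q"
proof -
  have preserved: "u \<in> pst P" if "t \<in> pst P" "B t" "(t, u) \<in> behs S" for t u
  proof -
    have "t \<in> pst P'"
      using assms(1) that(1,2) by (simp add: equiv_B_def)
    with that(3) have "u \<in> pst (Seq P' S)"
      by (auto simp: pst_Seq)
    also have "\<dots> \<subseteq> pst (Seq \<gamma> P)"
      using assms(3) by (simp add: op_triple_def)
    also have "\<dots> \<subseteq> pst P"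
      by (rule pst_Seq_subset)
    finally show ?thesis .
  qed
  have "u \<in> pst P \<and> \<not> B u" if "s \<in> pst P" "(s, u) \<in> behs (While B S)" for s u
    using behs_While_invariant[OF preserved that(2,1)] .
  then show ?thesis
    using assms(2) by (auto simp: op_triple_def pst_Seq equiv_B_def)
qed

end
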